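(* (a) Let $\alpha,\beta>0$, $\lambda\in\mathbb{R}$, $a,b>0$ with $-b<\frac{\lambda}{2}<b$. If $X\sim\mathrm{K}(\lambda,a,b;1,\alpha)$ and $Y\sim\mathrm{K}(-\lambda,a,b;1,\beta)$ are independent and $(U,V)=\tilde H_{II}^{\alpha,\beta}(X,Y)$, then $U,V$ are independent with $U\sim\mathrm{K}(-\lambda,a,b;\alpha,1)$ and $V\sim\mathrm{K}(\lambda,a,b;\beta,1)$. (b) Let $\lambda<0$, $a,b>0$ with $-b<\frac{\lambda}{2}$. If $X\sim\mathrm{K}^{(2)}(b+\frac{\lambda}{2},-\lambda,a)$ and $Y\sim\mathrm{Ga}(-\lambda,a)$ are independent and $(U,V)=F^+_{\mathrm{K\text{-}Ga},A}(X,Y)$, then $U,V$ are independent with $U\sim\mathrm{K}^{(2)}(b-\frac{\lambda}{2},\lambda,a)$ and $V\sim\mathrm{Be}'(b+\frac{\lambda}{2},-\lambda)$.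
   Context: $\mathbb{R}_+=(0,\infty)$. For $p,q>0$, $a>0$, $-b<\frac{\lambda}{2}$: $\mathrm{K}(\lambda,a,b;p,q)$ has density on $\mathbb{R}_+$ proportional to $x^{\lambda-1}e^{-apx}(1+qx^{-1})^{-b+\frac{\lambda}{2}}$. $\mathrm{K}^{(2)}(A,B,C)$ ($A,C>0$, $B\in\mathbb{R}$) has density proportional to $x^{A-1}(1+x)^{-A-B}e^{-Cx}$. $\mathrm{Ga}(A,C)$ ($A,C>0$) has density proportional to $x^{A-1}e^{-Cx}$. $\mathrm{Be}'(A,B)$ ($A,B>0$) has density proportional to $x^{A-1}(1+x)^{-A-B}$. $\tilde H_{II}^{\alpha,\beta}(x,y)=\left(\frac{y(\beta+x+y)}{\alpha\beta+\beta x+\alpha y},\ \frac{x(\alpha+x+y)}{\alpha\beta+\beta x+\alpha y}\right)$ and $F^+_{\mathrm{K\text{-}Ga},A}(x,y)=\left(x+y,\ \frac{x(x+y+1)}{y}\right)$, maps on $\mathbb{R}_+^2$. *)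

theory Defs
  imports "HOL-Probability.Probability"
begin

text \<open>Unnormalised densities on the positive half-line (zero elsewhere).\<close>

definition K_dens :: "real \<Rightarrow> real \<Rightarrow> real \<Rightarrow> real \<Rightarrow> real \<Rightarrow> real \<Rightarrow> real" where
  "K_dens lam a b p q x =
     (if 0 < x then x powr (lam - 1) * exp (- a * p * x) * (1 + q / x) powr (- b + lam / 2) else 0)"

definition K2_dens :: "real \<Rightarrow> real \<Rightarrow> real \<Rightarrow> real \<Rightarrow> real" where
  "K2_dens A B C x =
     (if 0 < x then x powr (A - 1) * (1 + x) powr (- A - B) * exp (- C * x) else 0)"

definition Ga_dens :: "real \<Rightarrow> real \<Rightarrow> real \<Rightarrow> real" where
  "Ga_dens A C x = (if 0 < x then x powr (A - 1) * exp (- C * x) else 0)"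

definition Beta'_dens :: "real \<Rightarrow> real \<Rightarrow> real \<Rightarrow> real" where
  "Beta'_dens A B x = (if 0 < x then x powr (A - 1) * (1 + x) powr (- A - B) else 0)"

definition has_density_prop :: "'a measure \<Rightarrow> ('a \<Rightarrow> real) \<Rightarrow> (real \<Rightarrow> real) \<Rightarrow> bool" where
  "has_density_prop M X f \<longleftrightarrow> (\<exists>c>0. distributed M lborel X (\<lambda>x. ennreal (c * f x)))"

definition H_II :: "real \<Rightarrow> real \<Rightarrow> real \<Rightarrow> real \<Rightarrow> real \<times> real" where
  "H_II \<alpha> \<beta> x y =
     (y * (\<beta> + x + y) / (\<alpha> * \<beta> + \<beta> * x + \<alpha> * y),
      x * (\<alpha> + x + y) / (\<alpha> * \<beta> + \<beta> * x + \<alpha> * y))"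

definition F_KGa_A :: "real \<Rightarrow> real \<Rightarrow> real \<times> real" where
  "F_KGa_A x y = (x + y, x * (x + y + 1) / y)"

end

theory Submission
  imports Defs
begin

text \<open>
  Both statements are instances of one principle: if \<open>(X, Y)\<close> has a product density \<open>f x g y\<close>
  and a map \<open>T\<close> of the open quadrant pushes \<open>f x g y\<close> forward to a density that again factorizes
  as \<open>P u Q v\<close>, then the components of \<open>T (X, Y)\<close> are independent with densities proportional
  to \<open>P\<close> and \<open>Q\<close>. The push-forward density is computed by writing \<open>T\<close> as a composition of maps
  each of which changes a single coordinate, so that only the one-dimensional change of variables
  (fibre by fibre, via Tonelli) is needed. For \<open>H\<^sub>I\<^sub>I\<close> the factorization goes through the
  coordinates \<open>(x + y, y / x)\<close>, in which the map becomes triangular. That the transported density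
  factorizes is an identity between products of powers and exponentials, which becomes linear after
  taking logarithms.
\<close>

section \<open>One-dimensional change of variables for nonnegative integrals\<close>

lemma nn_integral_lborel_supported:
  fixes f :: "'a::euclidean_space \<Rightarrow> real"
  assumes f: "f \<in> borel_measurable borel" "\<And>x. 0 \<le> f x" and supp: "\<And>x. x \<notin> T \<Longrightarrow> f x = 0"
  shows "(\<integral>\<^sup>+x. f x \<partial>lborel) = (if f integrable_on T then ennreal (integral T f) else \<infinity>)"
proof -
  have restrict: "(\<lambda>x. if x \<in> T then f x else 0) = f"
    using supp by auto
  show ?thesis
  proof (cases "f integrable_on T")
    case True
    then have "(f has_integral integral T f) UNIV"
      using has_integral_restrict_UNIV[of T f] restrict by (simp add: integrable_integral)
    with True show ?thesis
      by (simp add: nn_integral_has_integral_lborel[OF f])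
  next
    case False
    then have "\<not> (\<integral>\<^sup>+x. f x \<partial>lborel) < \<infinity>"
      using nn_integral_integrable_on[OF f] integrable_restrict_UNIV[of T f] restrict by auto
    with False show ?thesis
      by (simp add: less_top[symmetric])
  qed
qed

lemma nn_integral_lborel_change_of_variables:
  fixes f g g' :: "real \<Rightarrow> real"
  assumes S: "S \<in> sets lebesgue"
    and der: "\<And>z. z \<in> S \<Longrightarrow> (g has_field_derivative g' z) (at z within S)"
    and inj: "inj_on g S"
    and f: "f \<in> borel_measurable borel" "\<And>y. 0 \<le> f y" and supp: "\<And>y. y \<notin> g ` S \<Longrightarrow> f y = 0"
    and F: "(\<lambda>z. indicator S z * \<bar>g' z\<bar> * f (g z)) \<in> borel_measurable borel"
  shows "(\<integral>\<^sup>+y. f y \<partial>lborel) = (\<integral>\<^sup>+z. indicator S z * \<bar>g' z\<bar> * f (g z) \<partial>lborel)"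
proof -
  let ?F = "\<lambda>z. \<bar>g' z\<bar> * f (g z)"
  have cov: "?F absolutely_integrable_on S \<and> integral S ?F = b
      \<longleftrightarrow> f absolutely_integrable_on g ` S \<and> integral (g ` S) f = b" for b
    using has_absolute_integral_change_of_variables_real[OF S der inj, where f=f and b=b]
    by simp
  have F_nonneg: "0 \<le> ?F z" for z
    using f(2) by simp
  have "?F absolutely_integrable_on S \<longleftrightarrow> ?F integrable_on S"
    by (rule absolutely_integrable_on_iff_nonneg) (simp add: F_nonneg)
  moreover have "f absolutely_integrable_on g ` S \<longleftrightarrow> f integrable_on g ` S"
    by (rule absolutely_integrable_on_iff_nonneg) (simp add: f(2))
  ultimately have "?F integrable_on S \<longleftrightarrow> f integrable_on g ` S"
    and "f integrable_on g ` S \<Longrightarrow> integral S ?F = integral (g ` S) f"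
    using cov[of "integral S ?F"] cov[of "integral (g ` S) f"] by blast+
  moreover have "(\<lambda>z. indicator S z * ?F z) integrable_on S \<longleftrightarrow> ?F integrable_on S"
    and "integral S (\<lambda>z. indicator S z * ?F z) = integral S ?F"
    by (auto intro!: integrable_cong integral_cong)
  moreover have "(\<integral>\<^sup>+z. indicator S z * ?F z \<partial>lborel) = (if (\<lambda>z. indicator S z * ?F z) integrable_on S
      then ennreal (integral S (\<lambda>z. indicator S z * ?F z)) else \<infinity>)"
    using F by (intro nn_integral_lborel_supported) (auto simp: F_nonneg mult.assoc)
  ultimately show ?thesis
    by (simp add: nn_integral_lborel_supported[OF f supp] mult.assoc)
qed

section \<open>Push-forwards of planar densities\<close>

lemma distr_density_swap:
  fixes h :: "real \<times> real \<Rightarrow> real"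
  assumes [measurable]: "h \<in> borel_measurable (borel \<Otimes>\<^sub>M borel)"
  shows "distr (density (lborel \<Otimes>\<^sub>M lborel) h) (lborel \<Otimes>\<^sub>M lborel) (\<lambda>(x, y). (y, x))
       = density (lborel \<Otimes>\<^sub>M lborel) (\<lambda>(x, y). h (y, x))"
proof -
  have "distr (density (lborel \<Otimes>\<^sub>M lborel) h) (lborel \<Otimes>\<^sub>M lborel) (\<lambda>(x, y). (y, x))
      = density (distr (lborel \<Otimes>\<^sub>M lborel) (lborel \<Otimes>\<^sub>M lborel) (\<lambda>(x, y). (y, x))) (\<lambda>(x, y). h (y, x))"
    by (subst density_distr) (auto simp: case_prod_beta)
  then show ?thesis
    by (simp add: lborel_pair.distr_pair_swap[symmetric])
qed

lemma nn_integral_fiberwise_change_of_variables: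
  fixes h h' G :: "real \<times> real \<Rightarrow> real" and \<phi> \<psi> \<psi>' :: "real \<Rightarrow> real \<Rightarrow> real"
    and D R :: "real \<Rightarrow> real set"
  assumes [measurable]: "h \<in> borel_measurable (borel \<Otimes>\<^sub>M borel)"
      "h' \<in> borel_measurable (borel \<Otimes>\<^sub>M borel)" "(\<lambda>(x, y). \<phi> x y) \<in> borel_measurable (borel \<Otimes>\<^sub>M borel)"
      "G \<in> borel_measurable (borel \<Otimes>\<^sub>M borel)"
    and h_nonneg: "\<And>p. 0 \<le> h p" and G_nonneg: "\<And>p. 0 \<le> G p"
    and supp: "\<And>x y. y \<notin> D x \<Longrightarrow> h (x, y) = 0"
    and R: "\<And>x. R x \<in> sets lebesgue"
    and \<phi>: "\<And>x y. y \<in> D x \<Longrightarrow> \<phi> x y \<in> R x \<and> \<psi> x (\<phi> x y) = y"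
    and \<psi>: "\<And>x z. z \<in> R x \<Longrightarrow> \<phi> x (\<psi> x z) = z"
    and der: "\<And>x z. z \<in> R x \<Longrightarrow> (\<psi> x has_field_derivative \<psi>' x z) (at z within R x)"
    and h': "\<And>x z. h' (x, z) = indicator (R x) z * \<bar>\<psi>' x z\<bar> * h (x, \<psi> x z)"
  shows "(\<integral>\<^sup>+y. h (x, y) * G (x, \<phi> x y) \<partial>lborel) = (\<integral>\<^sup>+z. h' (x, z) * G (x, z) \<partial>lborel)"
proof -
  have "(\<lambda>(x, y). h (x, y) * G (x, \<phi> x y)) \<in> borel_measurable (borel \<Otimes>\<^sub>M borel)"
    and "(\<lambda>p. h' p * G p) \<in> borel_measurable (borel \<Otimes>\<^sub>M borel)"
    by measurable
  then have "(\<lambda>y. h (x, y) * G (x, \<phi> x y)) \<in> borel_measurable borel"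
    and "(\<lambda>z. h' (x, z) * G (x, z)) \<in> borel_measurable borel"
    by (auto dest: measurable_Pair2[where x=x])
  moreover have "h' (x, z) * G (x, z) = indicator (R x) z * \<bar>\<psi>' x z\<bar> * (h (x, \<psi> x z) * G (x, \<phi> x (\<psi> x z)))" for z
    using \<psi> by (auto simp: h' indicator_def)
  moreover have "inj_on (\<psi> x) (R x)"
    by (metis inj_onI \<psi>)
  moreover have "y \<notin> \<psi> x ` R x \<Longrightarrow> h (x, y) = 0" for y
    using supp \<phi> by (metis image_eqI)
  ultimately show ?thesis
    using nn_integral_lborel_change_of_variables[OF R der, of x "\<lambda>y. h (x, y) * G (x, \<phi> x y)"] h_nonneg G_nonneg
    by simp
qed

lemma distr_density_fiberwise_snd:
  fixes h h' :: "real \<times> real \<Rightarrow> real" and \<phi> \<psi> \<psi>' :: "real \<Rightarrow> real \<Rightarrow> real"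
    and D R :: "real \<Rightarrow> real set"
  assumes [measurable]: "h \<in> borel_measurable (borel \<Otimes>\<^sub>M borel)"
      "h' \<in> borel_measurable (borel \<Otimes>\<^sub>M borel)" "(\<lambda>(x, y). \<phi> x y) \<in> borel_measurable (borel \<Otimes>\<^sub>M borel)"
    and h_nonneg: "\<And>p. 0 \<le> h p" and supp: "\<And>x y. y \<notin> D x \<Longrightarrow> h (x, y) = 0"
    and R: "\<And>x. R x \<in> sets lebesgue"
    and \<phi>: "\<And>x y. y \<in> D x \<Longrightarrow> \<phi> x y \<in> R x \<and> \<psi> x (\<phi> x y) = y"
    and \<psi>: "\<And>x z. z \<in> R x \<Longrightarrow> \<phi> x (\<psi> x z) = z"
    and der: "\<And>x z. z \<in> R x \<Longrightarrow> (\<psi> x has_field_derivative \<psi>' x z) (at z within R x)"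
    and h': "\<And>x z. h' (x, z) = indicator (R x) z * \<bar>\<psi>' x z\<bar> * h (x, \<psi> x z)"
  shows "distr (density (lborel \<Otimes>\<^sub>M lborel) h) (lborel \<Otimes>\<^sub>M lborel) (\<lambda>(x, y). (x, \<phi> x y))
       = density (lborel \<Otimes>\<^sub>M lborel) h'"
proof (rule measure_eqI)
  fix A assume "A \<in> sets (distr (density (lborel \<Otimes>\<^sub>M lborel) h) (lborel \<Otimes>\<^sub>M lborel) (\<lambda>(x, y). (x, \<phi> x y)))"
  then have A [measurable]: "A \<in> sets (borel \<Otimes>\<^sub>M borel)"
    by simp
  have fiber: "(\<integral>\<^sup>+y. h (x, y) * indicator A (x, \<phi> x y) \<partial>lborel) = (\<integral>\<^sup>+z. h' (x, z) * indicator A (x, z) \<partial>lborel)"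
    for x
    by (rule nn_integral_fiberwise_change_of_variables[where D=D and R=R and \<psi>=\<psi> and \<psi>'=\<psi>',
          OF assms(1-3) _ h_nonneg _ supp R \<phi> \<psi> der h'])
      (simp_all add: borel_measurable_indicator[OF A])
  have "emeasure (distr (density (lborel \<Otimes>\<^sub>M lborel) h) (lborel \<Otimes>\<^sub>M lborel) (\<lambda>(x, y). (x, \<phi> x y))) A
      = (\<integral>\<^sup>+p. h p * indicator A (fst p, \<phi> (fst p) (snd p)) \<partial>(lborel \<Otimes>\<^sub>M lborel))"
  proof -
    have "(\<lambda>(x, y). (x, \<phi> x y)) \<in> borel \<Otimes>\<^sub>M borel \<rightarrow>\<^sub>M borel \<Otimes>\<^sub>M borel"
      by measurable
    from measurable_sets[OF this, of A]
    have "(\<lambda>(x, y). (x, \<phi> x y)) -` A \<inter> space (lborel \<Otimes>\<^sub>M lborel) \<in> sets (lborel \<Otimes>\<^sub>M lborel)"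
      by (simp add: space_pair_measure)
    then show ?thesis
      by (simp add: emeasure_distr emeasure_density)
        (auto intro!: nn_integral_cong simp: space_pair_measure case_prod_beta split: split_indicator)
  qed
  also have "\<dots> = (\<integral>\<^sup>+x. \<integral>\<^sup>+y. h (x, y) * indicator A (x, \<phi> x y) \<partial>lborel \<partial>lborel)"
    by (simp add: lborel.nn_integral_fst[symmetric])
  also have "\<dots> = (\<integral>\<^sup>+x. \<integral>\<^sup>+z. h' (x, z) * indicator A (x, z) \<partial>lborel \<partial>lborel)"
    by (simp add: fiber)
  also have "\<dots> = emeasure (density (lborel \<Otimes>\<^sub>M lborel) h') A"
  proof -
    have "0 \<le> h' p" for p
      using h_nonneg by (cases p) (simp add: h')
    then show ?thesis
      by (simp add: emeasure_density lborel.nn_integral_fst[symmetric] ennreal_mult' ennreal_indicator)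
  qed
  finally show "emeasure (distr (density (lborel \<Otimes>\<^sub>M lborel) h) (lborel \<Otimes>\<^sub>M lborel) (\<lambda>(x, y). (x, \<phi> x y))) A
      = emeasure (density (lborel \<Otimes>\<^sub>M lborel) h') A" .
qed simp

lemma distr_density_comp:
  assumes T: "T \<in> N \<rightarrow>\<^sub>M N" and S: "S \<in> N \<rightarrow>\<^sub>M N"
    and "distr (density N f) N T = density N g" and "distr (density N g) N S = density N k"
  shows "distr (density N f) N (S \<circ> T) = density N k"
proof -
  have "distr (density N f) N (S \<circ> T) = distr (distr (density N f) N T) N S"
    using T S by (simp add: distr_distr)
  with assms(3,4) show ?thesis
    by simp
qed

lemma distr_density_fiberwise_fst:
  fixes h h' :: "real \<times> real \<Rightarrow> real" and \<phi> \<psi> \<psi>' :: "real \<Rightarrow> real \<Rightarrow> real"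
    and D R :: "real \<Rightarrow> real set"
  assumes [measurable]: "h \<in> borel_measurable (borel \<Otimes>\<^sub>M borel)"
      "h' \<in> borel_measurable (borel \<Otimes>\<^sub>M borel)" "(\<lambda>(x, y). \<phi> y x) \<in> borel_measurable (borel \<Otimes>\<^sub>M borel)"
    and h_nonneg: "\<And>p. 0 \<le> h p" and supp: "\<And>x y. x \<notin> D y \<Longrightarrow> h (x, y) = 0"
    and R: "\<And>y. R y \<in> sets lebesgue"
    and \<phi>: "\<And>x y. x \<in> D y \<Longrightarrow> \<phi> y x \<in> R y \<and> \<psi> y (\<phi> y x) = x"
    and \<psi>: "\<And>y z. z \<in> R y \<Longrightarrow> \<phi> y (\<psi> y z) = z"
    and der: "\<And>y z. z \<in> R y \<Longrightarrow> (\<psi> y has_field_derivative \<psi>' y z) (at z within R y)"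
    and h': "\<And>y z. h' (z, y) = indicator (R y) z * \<bar>\<psi>' y z\<bar> * h (\<psi> y z, y)"
  shows "distr (density (lborel \<Otimes>\<^sub>M lborel) h) (lborel \<Otimes>\<^sub>M lborel) (\<lambda>(x, y). (\<phi> y x, y))
       = density (lborel \<Otimes>\<^sub>M lborel) h'"
proof -
  let ?swap = "\<lambda>(x, y). (y, x) :: real \<times> real"
  have [measurable]: "(\<lambda>(x, y). \<phi> x y) \<in> borel_measurable (borel \<Otimes>\<^sub>M borel)"
    using measurable_pair_swap[OF assms(3)] by (simp add: case_prod_beta)
  have [measurable]: "(\<lambda>(x, y). h' (y, x)) \<in> borel_measurable (borel \<Otimes>\<^sub>M borel)"
    using measurable_pair_swap[OF assms(2)] by simp
  have "(\<lambda>(x, y). (\<phi> y x, y)) = ?swap \<circ> (\<lambda>(x, y). (x, \<phi> x y)) \<circ> ?swap"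
    by (auto simp: fun_eq_iff)
  then show ?thesis
  proof (simp only:, intro distr_density_comp)
    show "distr (density (lborel \<Otimes>\<^sub>M lborel) h) (lborel \<Otimes>\<^sub>M lborel) ?swap
        = density (lborel \<Otimes>\<^sub>M lborel) (\<lambda>(x, y). h (y, x))"
      by (rule distr_density_swap) simp
    show "distr (density (lborel \<Otimes>\<^sub>M lborel) (\<lambda>(x, y). h (y, x))) (lborel \<Otimes>\<^sub>M lborel) (\<lambda>(x, y). (x, \<phi> x y))
        = density (lborel \<Otimes>\<^sub>M lborel) (\<lambda>(x, y). h' (y, x))"
      by (rule distr_density_fiberwise_snd[where D=D and R=R and \<psi>=\<psi> and \<psi>'=\<psi>'])
        (measurable, use h_nonneg supp R \<phi> \<psi> der h' in auto)
    show "distr (density (lborel \<Otimes>\<^sub>M lborel) (\<lambda>(x, y). h' (y, x))) (lborel \<Otimes>\<^sub>M lborel) ?swap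
        = density (lborel \<Otimes>\<^sub>M lborel) h'"
      using distr_density_swap[of "\<lambda>(x, y). h' (y, x)"] by (simp add: case_prod_beta)
  qed measurable
qed

section \<open>The maps \<open>H\<^sub>I\<^sub>I\<close> and \<open>F\<^sup>+\<close>\<close>

lemma distr_density_sum_ratio:
  fixes h :: "real \<times> real \<Rightarrow> real"
  assumes [measurable]: "h \<in> borel_measurable (borel \<Otimes>\<^sub>M borel)" and nonneg: "\<And>p. 0 \<le> h p"
    and supp: "\<And>x y. \<not> (0 < x \<and> 0 < y) \<Longrightarrow> h (x, y) = 0"
  shows "distr (density (lborel \<Otimes>\<^sub>M lborel) h) (lborel \<Otimes>\<^sub>M lborel) (\<lambda>(x, y). (x + y, y / x))
       = density (lborel \<Otimes>\<^sub>M lborel)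
           (\<lambda>(s, r). if 0 < s \<and> 0 < r then s / (1 + r)\<^sup>2 * h (s / (1 + r), s * r / (1 + r)) else 0)"
proof -
  define h1 where "h1 = (\<lambda>(s, y). if 0 < y \<and> y < s then h (s - y, y) else 0)"
  have [measurable]: "h1 \<in> borel_measurable (borel \<Otimes>\<^sub>M borel)"
    unfolding h1_def by measurable
  have comp: "(\<lambda>(x, y). (x + y, y / x :: real)) = (\<lambda>(s, y). (s, y / (s - y))) \<circ> (\<lambda>(x, y). (x + y, y))"
    by (simp add: fun_eq_iff)
  have sum: "distr (density (lborel \<Otimes>\<^sub>M lborel) h) (lborel \<Otimes>\<^sub>M lborel) (\<lambda>(x, y). (x + y, y))
      = density (lborel \<Otimes>\<^sub>M lborel) h1"
    by (rule distr_density_fiberwise_fst[where D="\<lambda>y. {x. 0 < x \<and> 0 < y}" and R="\<lambda>y. {s. 0 < y \<and> y < s}"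
          and \<psi>="\<lambda>y s. s - y" and \<psi>'="\<lambda>_ _. 1"])
      (use nonneg supp in \<open>auto intro!: derivative_eq_intros simp: h1_def\<close>)
  have diff: "s - s * r / (1 + r) = s / (1 + r)" if "0 < r" for s r :: real
    using that by (simp add: field_simps)
  define h2 where "h2 = (\<lambda>(s, r). if 0 < s \<and> 0 < r then s / (1 + r)\<^sup>2 * h (s / (1 + r), s * r / (1 + r)) else 0)"
  have ratio: "distr (density (lborel \<Otimes>\<^sub>M lborel) h1) (lborel \<Otimes>\<^sub>M lborel) (\<lambda>(s, y). (s, y / (s - y)))
      = density (lborel \<Otimes>\<^sub>M lborel) h2"
  proof (rule distr_density_fiberwise_snd[where D="\<lambda>s. {y. 0 < y \<and> y < s}" and R="\<lambda>s. {r. 0 < s \<and> 0 < r}"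
        and \<psi>="\<lambda>s r. s * r / (1 + r)" and \<psi>'="\<lambda>s r. s / (1 + r)\<^sup>2"])
    show "0 \<le> h1 p" for p
      using nonneg by (auto simp: h1_def split: prod.split)
    show "((\<lambda>r. s * r / (1 + r)) has_real_derivative s / (1 + r)\<^sup>2) (at r within {r. 0 < s \<and> 0 < r})"
      if "r \<in> {r. 0 < s \<and> 0 < r}" for s r :: real
      using that by (auto intro!: derivative_eq_intros simp: field_simps power2_eq_square)
    show "y / (s - y) \<in> {r. 0 < s \<and> 0 < r} \<and> s * (y / (s - y)) / (1 + y / (s - y)) = y"
      if "y \<in> {y. 0 < y \<and> y < s}" for s y :: real
    proof -
      from that have "0 < y" "0 < s - y"
        by auto
      moreover from this have "1 + y / (s - y) = s / (s - y)"
        by (simp add: field_simps)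
      ultimately show ?thesis
        by simp
    qed
    show "s * r / (1 + r) / (s - s * r / (1 + r)) = r" if "r \<in> {r. 0 < s \<and> 0 < r}" for s r :: real
      using that by (simp add: diff)
    show "h2 (s, r) = indicator {r. 0 < s \<and> 0 < r} r * \<bar>s / (1 + r)\<^sup>2\<bar> * h1 (s, s * r / (1 + r))" for s r :: real
    proof (cases "0 < s \<and> 0 < r")
      case True
      then have "s * r / (1 + r) < s"
        by (simp add: field_simps)
      with True show ?thesis
        by (simp add: h1_def h2_def diff)
    qed (auto simp: h2_def)
  qed (auto simp: h1_def h2_def)
  show ?thesis
    unfolding comp h2_def[symmetric] by (rule distr_density_comp[OF _ _ sum ratio]) measurable
qed

lemma distr_density_sum_ratio_inverse:
  fixes g :: "real \<times> real \<Rightarrow> real"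
  assumes [measurable]: "g \<in> borel_measurable (borel \<Otimes>\<^sub>M borel)" and nonneg: "\<And>p. 0 \<le> g p"
    and supp: "\<And>t \<rho>. \<not> (0 < t \<and> 0 < \<rho>) \<Longrightarrow> g (t, \<rho>) = 0"
  shows "distr (density (lborel \<Otimes>\<^sub>M lborel) g) (lborel \<Otimes>\<^sub>M lborel) (\<lambda>(t, \<rho>). (t - t / (1 + \<rho>), t / (1 + \<rho>)))
       = density (lborel \<Otimes>\<^sub>M lborel) (\<lambda>(u, v). if 0 < u \<and> 0 < v then (u + v) / v\<^sup>2 * g (u + v, u / v) else 0)"
proof -
  define g1 where "g1 = (\<lambda>(t, v). if 0 < v \<and> v < t then t / v\<^sup>2 * g (t, t / v - 1) else 0)"
  define g2 where "g2 = (\<lambda>(u, v). if 0 < u \<and> 0 < v then (u + v) / v\<^sup>2 * g (u + v, u / v) else 0)"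
  have [measurable]: "g1 \<in> borel_measurable (borel \<Otimes>\<^sub>M borel)"
    unfolding g1_def by measurable
  have comp: "(\<lambda>(t, \<rho>). (t - t / (1 + \<rho>), t / (1 + \<rho>) :: real)) = (\<lambda>(t, v). (t - v, v)) \<circ> (\<lambda>(t, \<rho>). (t, t / (1 + \<rho>)))"
    by (simp add: fun_eq_iff)
  have "distr (density (lborel \<Otimes>\<^sub>M lborel) g) (lborel \<Otimes>\<^sub>M lborel) (\<lambda>(t, \<rho>). (t, t / (1 + \<rho>)))
      = density (lborel \<Otimes>\<^sub>M lborel) g1"
  proof (rule distr_density_fiberwise_snd[where D="\<lambda>t. {\<rho>. 0 < \<rho> \<and> 0 < t}" and R="\<lambda>t. {v. 0 < v \<and> v < t}"
        and \<psi>="\<lambda>t v. t / v - 1" and \<psi>'="\<lambda>t v. - t / v\<^sup>2"])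
    show "((\<lambda>v. t / v - 1) has_real_derivative - t / v\<^sup>2) (at v within {v. 0 < v \<and> v < t})"
      if "v \<in> {v. 0 < v \<and> v < t}" for t v :: real
      using that by (auto intro!: derivative_eq_intros simp: field_simps power2_eq_square)
    show "t / (1 + \<rho>) \<in> {v. 0 < v \<and> v < t} \<and> t / (t / (1 + \<rho>)) - 1 = \<rho>"
      if "\<rho> \<in> {\<rho>. 0 < \<rho> \<and> 0 < t}" for t \<rho> :: real
      using that by (auto simp: divide_less_eq)
    show "t / (1 + (t / v - 1)) = v" if "v \<in> {v. 0 < v \<and> v < t}" for t v :: real
      using that by simp
    show "g1 (t, v) = indicator {v. 0 < v \<and> v < t} v * \<bar>- t / v\<^sup>2\<bar> * g (t, t / v - 1)" for t v :: real
      by (auto simp: g1_def)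
  qed (use nonneg supp in \<open>auto simp: g1_def\<close>)
  moreover have "distr (density (lborel \<Otimes>\<^sub>M lborel) g1) (lborel \<Otimes>\<^sub>M lborel) (\<lambda>(t, v). (t - v, v))
      = density (lborel \<Otimes>\<^sub>M lborel) g2"
  proof (rule distr_density_fiberwise_fst[where D="\<lambda>v. {t. 0 < v \<and> v < t}" and R="\<lambda>v. {u. 0 < v \<and> 0 < u}"
        and \<psi>="\<lambda>v u. u + v" and \<psi>'="\<lambda>_ _. 1"])
    show "g2 (u, v) = indicator {u. 0 < v \<and> 0 < u} u * \<bar>1\<bar> * g1 (u + v, v)" for u v :: real
      by (auto simp: g1_def g2_def field_simps)
  qed (use nonneg in \<open>auto intro!: derivative_eq_intros simp: g1_def g2_def\<close>)
  ultimately show ?thesis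
    unfolding comp g2_def[symmetric] by (intro distr_density_comp) measurable
qed

text \<open>
  In the coordinates \<open>s = x + y, r = y / x\<close> of the argument and \<open>t = u + v, \<rho> = u / v\<close> of the value,
  \<open>H\<^sub>I\<^sub>I\<close> is triangular: \<open>\<rho> = r (\<beta> + s) / (\<alpha> + s)\<close>, and \<open>t\<close> is then determined by \<open>\<alpha> u + \<beta> v = s\<close>.
\<close>

lemma distr_density_H_II_sum_ratio:
  fixes \<alpha> \<beta> :: real and g :: "real \<times> real \<Rightarrow> real"
  assumes \<alpha>: "0 < \<alpha>" and \<beta>: "0 < \<beta>"
    and [measurable]: "g \<in> borel_measurable (borel \<Otimes>\<^sub>M borel)" and nonneg: "\<And>p. 0 \<le> g p"
    and supp: "\<And>s r. \<not> (0 < s \<and> 0 < r) \<Longrightarrow> g (s, r) = 0"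
  shows "distr (density (lborel \<Otimes>\<^sub>M lborel) g) (lborel \<Otimes>\<^sub>M lborel)
      (\<lambda>(s, r). let \<rho> = r * (\<beta> + s) / (\<alpha> + s) in (s * (1 + \<rho>) / (\<beta> + \<alpha> * \<rho>), \<rho>))
    = density (lborel \<Otimes>\<^sub>M lborel) (\<lambda>(t, \<rho>). if 0 < t \<and> 0 < \<rho> then
        let s = t * (\<beta> + \<alpha> * \<rho>) / (1 + \<rho>) in
          (\<beta> + \<alpha> * \<rho>) / (1 + \<rho>) * ((\<alpha> + s) / (\<beta> + s)) * g (s, \<rho> * (\<alpha> + s) / (\<beta> + s))
        else 0)"
proof -
  define g1 where "g1 = (\<lambda>(s, \<rho>). if 0 < s \<and> 0 < \<rho> then (\<alpha> + s) / (\<beta> + s) * g (s, \<rho> * (\<alpha> + s) / (\<beta> + s)) else 0)"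
  define g2 where "g2 = (\<lambda>(t, \<rho>). if 0 < t \<and> 0 < \<rho> then
        let s = t * (\<beta> + \<alpha> * \<rho>) / (1 + \<rho>) in
          (\<beta> + \<alpha> * \<rho>) / (1 + \<rho>) * ((\<alpha> + s) / (\<beta> + s)) * g (s, \<rho> * (\<alpha> + s) / (\<beta> + s))
        else 0)"
  have [measurable]: "g1 \<in> borel_measurable (borel \<Otimes>\<^sub>M borel)" "g2 \<in> borel_measurable (borel \<Otimes>\<^sub>M borel)"
    unfolding g1_def g2_def Let_def by measurable
  have g1_nonneg: "0 \<le> g1 p" for p
    using nonneg \<alpha> \<beta> by (auto simp: g1_def split: prod.split)
  have comp: "(\<lambda>(s, r). let \<rho> = r * (\<beta> + s) / (\<alpha> + s) in (s * (1 + \<rho>) / (\<beta> + \<alpha> * \<rho>), \<rho>))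
      = (\<lambda>(s, \<rho>). (s * (1 + \<rho>) / (\<beta> + \<alpha> * \<rho>), \<rho>)) \<circ> (\<lambda>(s, r). (s, r * (\<beta> + s) / (\<alpha> + s)))"
    by (simp add: fun_eq_iff Let_def)
  have "distr (density (lborel \<Otimes>\<^sub>M lborel) g) (lborel \<Otimes>\<^sub>M lborel) (\<lambda>(s, r). (s, r * (\<beta> + s) / (\<alpha> + s)))
      = density (lborel \<Otimes>\<^sub>M lborel) g1"
  proof (rule distr_density_fiberwise_snd[where D="\<lambda>s. {r. 0 < s \<and> 0 < r}" and R="\<lambda>s. {r. 0 < s \<and> 0 < r}"
        and \<psi>="\<lambda>s \<rho>. \<rho> * (\<alpha> + s) / (\<beta> + s)" and \<psi>'="\<lambda>s \<rho>. (\<alpha> + s) / (\<beta> + s)"])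
    show "g1 (s, \<rho>) = indicator {r. 0 < s \<and> 0 < r} \<rho> * \<bar>(\<alpha> + s) / (\<beta> + s)\<bar> * g (s, \<rho> * (\<alpha> + s) / (\<beta> + s))"
      for s \<rho>
      using \<alpha> \<beta> by (auto simp: g1_def)
  qed (use \<alpha> \<beta> nonneg supp in \<open>auto intro!: derivative_eq_intros\<close>)
  moreover have "distr (density (lborel \<Otimes>\<^sub>M lborel) g1) (lborel \<Otimes>\<^sub>M lborel) (\<lambda>(s, \<rho>). (s * (1 + \<rho>) / (\<beta> + \<alpha> * \<rho>), \<rho>))
      = density (lborel \<Otimes>\<^sub>M lborel) g2"
  proof (rule distr_density_fiberwise_fst[where D="\<lambda>\<rho>. {s. 0 < s \<and> 0 < \<rho>}" and R="\<lambda>\<rho>. {t. 0 < t \<and> 0 < \<rho>}"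
        and \<psi>="\<lambda>\<rho> t. t * (\<beta> + \<alpha> * \<rho>) / (1 + \<rho>)" and \<psi>'="\<lambda>\<rho> t. (\<beta> + \<alpha> * \<rho>) / (1 + \<rho>)"])
    have pos: "0 < \<beta> + \<alpha> * \<rho>" if "0 < \<rho>" for \<rho>
      using \<alpha> \<beta> that by (simp add: add_pos_pos)
    show "s * (1 + \<rho>) / (\<beta> + \<alpha> * \<rho>) \<in> {t. 0 < t \<and> 0 < \<rho>}
        \<and> s * (1 + \<rho>) / (\<beta> + \<alpha> * \<rho>) * (\<beta> + \<alpha> * \<rho>) / (1 + \<rho>) = s"
      if "s \<in> {s. 0 < s \<and> 0 < \<rho>}" for \<rho> s
      using that pos[of \<rho>] by simp
    show "t * (\<beta> + \<alpha> * \<rho>) / (1 + \<rho>) * (1 + \<rho>) / (\<beta> + \<alpha> * \<rho>) = t"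
      if "t \<in> {t. 0 < t \<and> 0 < \<rho>}" for \<rho> t
      using that pos[of \<rho>] by simp
    show "g2 (t, \<rho>) = indicator {t. 0 < t \<and> 0 < \<rho>} t * \<bar>(\<beta> + \<alpha> * \<rho>) / (1 + \<rho>)\<bar>
        * g1 (t * (\<beta> + \<alpha> * \<rho>) / (1 + \<rho>), \<rho>)" for t \<rho>
      using pos[of \<rho>] by (auto simp: g1_def g2_def Let_def mult.assoc)
  qed (use g1_nonneg in \<open>auto intro!: derivative_eq_intros simp: g1_def\<close>)
  ultimately show ?thesis
    unfolding comp g2_def[symmetric] by (intro distr_density_comp) measurable
qed

lemma H_II_sum_ratio_coordinates:
  fixes \<alpha> \<beta> x y :: real
  assumes pos_args: "0 < \<alpha>" "0 < \<beta>" "0 < x" "0 < y"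
  defines "s \<equiv> x + y"
  defines "\<rho> \<equiv> y / x * (\<beta> + s) / (\<alpha> + s)"
  defines "t \<equiv> s * (1 + \<rho>) / (\<beta> + \<alpha> * \<rho>)"
  shows "(t - t / (1 + \<rho>), t / (1 + \<rho>)) = H_II \<alpha> \<beta> x y"
proof -
  define D where "D = \<alpha> * \<beta> + \<beta> * x + \<alpha> * y"
  have pos: "0 < s" "0 < D" "0 < \<rho>"
    using pos_args by (simp_all add: s_def D_def \<rho>_def add_pos_pos)
  have nz: "x * (\<alpha> + s) \<noteq> 0"
    using pos_args pos by auto
  have "\<beta> + \<alpha> * \<rho> = (\<beta> * (x * (\<alpha> + s)) + \<alpha> * (y * (\<beta> + s))) / (x * (\<alpha> + s))"
    using nz by (simp add: \<rho>_def add_divide_eq_iff)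
  also have "\<beta> * (x * (\<alpha> + s)) + \<alpha> * (y * (\<beta> + s)) = s * D"
    by (simp add: s_def D_def algebra_simps)
  finally have "\<beta> + \<alpha> * \<rho> = s * D / (x * (\<alpha> + s))" .
  then have v: "t / (1 + \<rho>) = x * (\<alpha> + s) / D"
    using pos_args pos by (simp add: t_def)
  have "t - t / (1 + \<rho>) = t / (1 + \<rho>) * \<rho>"
    using pos by (simp add: field_simps)
  also have "\<dots> = x * (\<alpha> + s) / D * \<rho>"
    by (simp only: v)
  also have "\<dots> = y * (\<beta> + s) / D"
  proof -
    have "x \<noteq> 0" "\<alpha> + s \<noteq> 0"
      using nz by auto
    then have "x * (\<alpha> + s) * \<rho> = y * (\<beta> + s)"
      by (simp add: \<rho>_def)
    then show ?thesis
      by (metis times_divide_eq_left)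
  qed
  finally show ?thesis
    using v by (simp add: H_II_def D_def s_def add_ac)
qed

lemma H_II_inverse_sum_ratio_coordinates:
  fixes \<alpha> \<beta> u v :: real
  assumes pos_args: "0 < \<alpha>" "0 < \<beta>" "0 < u" "0 < v"
  defines "\<rho> \<equiv> u / v"
  defines "s \<equiv> (u + v) * (\<beta> + \<alpha> * \<rho>) / (1 + \<rho>)"
  defines "r \<equiv> \<rho> * (\<alpha> + s) / (\<beta> + s)"
  shows "s = \<alpha> * u + \<beta> * v" and "0 < r"
    and "s / (1 + r) = v * (\<beta> + \<alpha> * u + \<beta> * v) / (1 + u + v)"
    and "s * r / (1 + r) = u * (\<alpha> + \<alpha> * u + \<beta> * v) / (1 + u + v)"
    and "(u + v) / v\<^sup>2 * ((\<beta> + \<alpha> * \<rho>) / (1 + \<rho>) * ((\<alpha> + s) / (\<beta> + s))) * (s / (1 + r)\<^sup>2)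
      = (\<alpha> + \<alpha> * u + \<beta> * v) * (\<beta> + \<alpha> * u + \<beta> * v) / (1 + u + v)\<^sup>2"
proof -
  have \<rho>: "(\<beta> + \<alpha> * \<rho>) / (1 + \<rho>) = (\<alpha> * u + \<beta> * v) / (u + v)"
    using pos_args by (simp add: \<rho>_def divide_simps) (simp add: algebra_simps)
  have "s = (u + v) * ((\<beta> + \<alpha> * \<rho>) / (1 + \<rho>))"
    by (simp add: s_def)
  also have "\<dots> = \<alpha> * u + \<beta> * v"
    using pos_args by (simp add: \<rho>)
  finally show s: "s = \<alpha> * u + \<beta> * v" .
  have s_pos: "0 < s"
    using pos_args by (simp add: s add_pos_pos)
  show r_pos: "0 < r"
    using pos_args s_pos by (simp add: r_def \<rho>_def)
  have "1 + r = (v * (\<beta> + s) + u * (\<alpha> + s)) / (v * (\<beta> + s))"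
    using pos_args s_pos by (simp add: r_def \<rho>_def divide_simps)
  also have "v * (\<beta> + s) + u * (\<alpha> + s) = s * (1 + u + v)"
    by (simp add: s algebra_simps)
  finally have r: "1 + r = s * (1 + u + v) / (v * (\<beta> + s))" .
  show first: "s / (1 + r) = v * (\<beta> + \<alpha> * u + \<beta> * v) / (1 + u + v)"
    using pos_args s_pos by (simp add: r) (simp add: s add.assoc)
  show "s * r / (1 + r) = u * (\<alpha> + \<alpha> * u + \<beta> * v) / (1 + u + v)"
  proof -
    have "s * r / (1 + r) = s - s / (1 + r)"
      using r_pos by (simp add: field_simps)
    also have "\<dots> = s - v * (\<beta> + \<alpha> * u + \<beta> * v) / (1 + u + v)"
      by (simp only: first)
    also have "\<dots> = u * (\<alpha> + \<alpha> * u + \<beta> * v) / (1 + u + v)"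
      using pos_args by (simp add: s field_simps add_pos_pos)
    finally show ?thesis .
  qed
  have jacobian: "W / v\<^sup>2 * (s / W * (A / B)) * (s / (s * N / (v * B))\<^sup>2) = A * B / N\<^sup>2"
    if "W \<noteq> 0" "v \<noteq> 0" "B \<noteq> 0" "s \<noteq> 0" "N \<noteq> 0" for W v A B N s :: real
    using that by (simp add: field_simps power2_eq_square)
  have "(\<beta> + \<alpha> * \<rho>) / (1 + \<rho>) = s / (u + v)"
    by (simp add: \<rho> s)
  then show "(u + v) / v\<^sup>2 * ((\<beta> + \<alpha> * \<rho>) / (1 + \<rho>) * ((\<alpha> + s) / (\<beta> + s))) * (s / (1 + r)\<^sup>2)
      = (\<alpha> + \<alpha> * u + \<beta> * v) * (\<beta> + \<alpha> * u + \<beta> * v) / (1 + u + v)\<^sup>2"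
    using pos_args s_pos jacobian[of "u + v" v "\<beta> + s" s "1 + u + v" "\<alpha> + s"]
    by (simp add: r) (simp add: s add.assoc)
qed

lemma distr_density_H_II:
  fixes \<alpha> \<beta> :: real and h :: "real \<times> real \<Rightarrow> real"
  assumes \<alpha>: "0 < \<alpha>" and \<beta>: "0 < \<beta>"
    and [measurable]: "h \<in> borel_measurable (borel \<Otimes>\<^sub>M borel)" and nonneg: "\<And>p. 0 \<le> h p"
    and supp: "\<And>x y. \<not> (0 < x \<and> 0 < y) \<Longrightarrow> h (x, y) = 0"
  shows "distr (density (lborel \<Otimes>\<^sub>M lborel) h) (lborel \<Otimes>\<^sub>M lborel) (\<lambda>(x, y). H_II \<alpha> \<beta> x y)
    = density (lborel \<Otimes>\<^sub>M lborel) (\<lambda>(u, v). if 0 < u \<and> 0 < v then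
        (\<alpha> + \<alpha> * u + \<beta> * v) * (\<beta> + \<alpha> * u + \<beta> * v) / (1 + u + v)\<^sup>2
          * h (v * (\<beta> + \<alpha> * u + \<beta> * v) / (1 + u + v), u * (\<alpha> + \<alpha> * u + \<beta> * v) / (1 + u + v))
        else 0)"
proof -
  define P where "P = (\<lambda>(x, y). (x + y, y / x :: real))"
  define Q where "Q = (\<lambda>(s, r). let \<rho> = r * (\<beta> + s) / (\<alpha> + s) in (s * (1 + \<rho>) / (\<beta> + \<alpha> * \<rho>), \<rho>))"
  define R where "R = (\<lambda>(t, \<rho>). (t - t / (1 + \<rho>), t / (1 + \<rho>) :: real))"
  define g1 where "g1 = (\<lambda>(s, r). if 0 < s \<and> 0 < r then s / (1 + r)\<^sup>2 * h (s / (1 + r), s * r / (1 + r)) else 0)"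
  define g2 where "g2 = (\<lambda>(t, \<rho>). if 0 < t \<and> 0 < \<rho> then
      let s = t * (\<beta> + \<alpha> * \<rho>) / (1 + \<rho>) in
        (\<beta> + \<alpha> * \<rho>) / (1 + \<rho>) * ((\<alpha> + s) / (\<beta> + s)) * g1 (s, \<rho> * (\<alpha> + s) / (\<beta> + s))
      else 0)"
  have [measurable]: "g1 \<in> borel_measurable (borel \<Otimes>\<^sub>M borel)" "g2 \<in> borel_measurable (borel \<Otimes>\<^sub>M borel)"
    unfolding g1_def g2_def Let_def by measurable
  have g1_nonneg: "0 \<le> g1 p" for p
    using nonneg by (auto simp: g1_def split: prod.split)
  have g2_nonneg: "0 \<le> g2 p" for p
    using g1_nonneg \<alpha> \<beta> by (auto simp: g2_def Let_def split: prod.split)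
  have "distr (density (lborel \<Otimes>\<^sub>M lborel) h) (lborel \<Otimes>\<^sub>M lborel) (R \<circ> Q \<circ> P)
      = density (lborel \<Otimes>\<^sub>M lborel) (\<lambda>(u, v). if 0 < u \<and> 0 < v then (u + v) / v\<^sup>2 * g2 (u + v, u / v) else 0)"
  proof (intro distr_density_comp)
    show "distr (density (lborel \<Otimes>\<^sub>M lborel) h) (lborel \<Otimes>\<^sub>M lborel) P = density (lborel \<Otimes>\<^sub>M lborel) g1"
      unfolding P_def g1_def using nonneg supp by (intro distr_density_sum_ratio) auto
    show "distr (density (lborel \<Otimes>\<^sub>M lborel) g1) (lborel \<Otimes>\<^sub>M lborel) Q = density (lborel \<Otimes>\<^sub>M lborel) g2"
      unfolding Q_def g2_def using \<alpha> \<beta> g1_nonneg by (intro distr_density_H_II_sum_ratio) (auto simp: g1_def)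
    show "distr (density (lborel \<Otimes>\<^sub>M lborel) g2) (lborel \<Otimes>\<^sub>M lborel) R
        = density (lborel \<Otimes>\<^sub>M lborel) (\<lambda>(u, v). if 0 < u \<and> 0 < v then (u + v) / v\<^sup>2 * g2 (u + v, u / v) else 0)"
      unfolding R_def by (intro distr_density_sum_ratio_inverse) (measurable, simp add: g2_nonneg, auto simp: g2_def)
  qed (unfold P_def Q_def R_def Let_def, measurable)
  moreover have "distr (density (lborel \<Otimes>\<^sub>M lborel) h) (lborel \<Otimes>\<^sub>M lborel) (\<lambda>(x, y). H_II \<alpha> \<beta> x y)
      = distr (density (lborel \<Otimes>\<^sub>M lborel) h) (lborel \<Otimes>\<^sub>M lborel) (R \<circ> Q \<circ> P)"
  proof (rule distr_cong_AE)
    have "(\<lambda>(x, y). H_II \<alpha> \<beta> x y) z = (R \<circ> Q \<circ> P) z" if "h z \<noteq> 0" for z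
    proof (cases z)
      case (Pair x y)
      with that supp have "0 < x" "0 < y"
        by blast+
      then have "(R \<circ> Q \<circ> P) (x, y) = H_II \<alpha> \<beta> x y"
        unfolding P_def Q_def R_def Let_def comp_def case_prod_conv by (rule H_II_sum_ratio_coordinates[OF \<alpha> \<beta>])
      with Pair show ?thesis
        by simp
    qed
    then show "AE z in density (lborel \<Otimes>\<^sub>M lborel) h. (\<lambda>(x, y). H_II \<alpha> \<beta> x y) z = (R \<circ> Q \<circ> P) z"
      by (subst AE_density) (auto intro!: AE_I2)
    show "(\<lambda>(x, y). H_II \<alpha> \<beta> x y) \<in> density (lborel \<Otimes>\<^sub>M lborel) h \<rightarrow>\<^sub>M lborel \<Otimes>\<^sub>M lborel"
      unfolding H_II_def by measurable
    show "R \<circ> Q \<circ> P \<in> density (lborel \<Otimes>\<^sub>M lborel) h \<rightarrow>\<^sub>M lborel \<Otimes>\<^sub>M lborel"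
      unfolding P_def Q_def R_def Let_def comp_def by measurable
  qed simp_all
  moreover have "(u + v) / v\<^sup>2 * g2 (u + v, u / v) = (\<alpha> + \<alpha> * u + \<beta> * v) * (\<beta> + \<alpha> * u + \<beta> * v) / (1 + u + v)\<^sup>2
      * h (v * (\<beta> + \<alpha> * u + \<beta> * v) / (1 + u + v), u * (\<alpha> + \<alpha> * u + \<beta> * v) / (1 + u + v))"
    if "0 < u" "0 < v" for u v
  proof -
    note coords = H_II_inverse_sum_ratio_coordinates[OF \<alpha> \<beta> that]
    let ?\<rho> = "u / v"
    let ?s = "(u + v) * (\<beta> + \<alpha> * ?\<rho>) / (1 + ?\<rho>)"
    let ?r = "?\<rho> * (\<alpha> + ?s) / (\<beta> + ?s)"
    have "0 < u + v \<and> 0 < u / v"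
      using that by simp
    moreover have "0 < ?s \<and> 0 < ?r"
      using that \<alpha> \<beta> coords(1,2) by (simp add: add_pos_pos)
    ultimately have "(u + v) / v\<^sup>2 * g2 (u + v, u / v)
        = (u + v) / v\<^sup>2 * ((\<beta> + \<alpha> * ?\<rho>) / (1 + ?\<rho>) * ((\<alpha> + ?s) / (\<beta> + ?s))) * (?s / (1 + ?r)\<^sup>2)
          * h (?s / (1 + ?r), ?s * ?r / (1 + ?r))"
      unfolding g2_def g1_def Let_def by (simp only: case_prod_conv simp_thms if_True mult.assoc)
    then show ?thesis
      by (simp only: coords(3-5))
  qed
  ultimately show ?thesis
    by (simp cong: if_cong)
qed

lemma distr_density_F_KGa_A:
  fixes h :: "real \<times> real \<Rightarrow> real"
  assumes [measurable]: "h \<in> borel_measurable (borel \<Otimes>\<^sub>M borel)" and nonneg: "\<And>p. 0 \<le> h p"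
    and supp: "\<And>x y. \<not> (0 < x \<and> 0 < y) \<Longrightarrow> h (x, y) = 0"
  shows "distr (density (lborel \<Otimes>\<^sub>M lborel) h) (lborel \<Otimes>\<^sub>M lborel) (\<lambda>(x, y). F_KGa_A x y)
    = density (lborel \<Otimes>\<^sub>M lborel) (\<lambda>(u, v). if 0 < u \<and> 0 < v then
        u * (1 + u) / (1 + u + v)\<^sup>2 * h (u * v / (1 + u + v), u * (1 + u) / (1 + u + v)) else 0)"
proof -
  define h1 where "h1 = (\<lambda>(x, s). if 0 < x \<and> x < s then h (x, s - x) else 0)"
  define h2 where "h2 = (\<lambda>(v, u). if 0 < u \<and> 0 < v then
      u * (1 + u) / (1 + u + v)\<^sup>2 * h (u * v / (1 + u + v), u * (1 + u) / (1 + u + v)) else 0)"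
  have [measurable]: "h1 \<in> borel_measurable (borel \<Otimes>\<^sub>M borel)" "h2 \<in> borel_measurable (borel \<Otimes>\<^sub>M borel)"
    unfolding h1_def h2_def by measurable
  have h1_nonneg: "0 \<le> h1 p" for p
    using nonneg by (auto simp: h1_def split: prod.split)
  have comp: "(\<lambda>(x, y). F_KGa_A x y) = (\<lambda>(v, u). (u, v)) \<circ> (\<lambda>(x, s). (x * (s + 1) / (s - x), s)) \<circ> (\<lambda>(x, y). (x, x + y))"
    by (simp add: fun_eq_iff F_KGa_A_def add_ac)
  have "distr (density (lborel \<Otimes>\<^sub>M lborel) h) (lborel \<Otimes>\<^sub>M lborel) (\<lambda>(x, y). (x, x + y))
      = density (lborel \<Otimes>\<^sub>M lborel) h1"
    by (rule distr_density_fiberwise_snd[where D="\<lambda>x. {y. 0 < x \<and> 0 < y}" and R="\<lambda>x. {s. 0 < x \<and> x < s}"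
          and \<psi>="\<lambda>x s. s - x" and \<psi>'="\<lambda>_ _. 1"])
      (use nonneg supp in \<open>auto intro!: derivative_eq_intros simp: h1_def\<close>)
  moreover have "distr (density (lborel \<Otimes>\<^sub>M lborel) h1) (lborel \<Otimes>\<^sub>M lborel) (\<lambda>(x, s). (x * (s + 1) / (s - x), s))
      = density (lborel \<Otimes>\<^sub>M lborel) h2"
  proof (rule distr_density_fiberwise_fst[where D="\<lambda>s. {x. 0 < x \<and> x < s}" and R="\<lambda>s. {v. 0 < s \<and> 0 < v}"
        and \<psi>="\<lambda>u v. u * v / (1 + u + v)" and \<psi>'="\<lambda>u v. u * (1 + u) / (1 + u + v)\<^sup>2"])
    show "((\<lambda>v. u * v / (1 + u + v)) has_real_derivative u * (1 + u) / (1 + u + v)\<^sup>2) (at v within {v. 0 < u \<and> 0 < v})"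
      if "v \<in> {v. 0 < u \<and> 0 < v}" for u v :: real
      using that by (auto intro!: derivative_eq_intros simp: field_simps power2_eq_square)
    show "x * (s + 1) / (s - x) \<in> {v. 0 < s \<and> 0 < v} \<and> s * (x * (s + 1) / (s - x)) / (1 + s + x * (s + 1) / (s - x)) = x"
      if "x \<in> {x. 0 < x \<and> x < s}" for s x :: real
    proof -
      from that have "0 < x" "0 < s - x"
        by auto
      moreover from this have "1 + s + x * (s + 1) / (s - x) = s * (s + 1) / (s - x)"
        by (simp add: field_simps)
      ultimately show ?thesis
        by simp
    qed
    show "u * v / (1 + u + v) * (u + 1) / (u - u * v / (1 + u + v)) = v" if "v \<in> {v. 0 < u \<and> 0 < v}" for u v :: real
    proof -
      from that have "0 < u" "0 < v"
        by auto
      moreover from this have "u - u * v / (1 + u + v) = u * (1 + u) / (1 + u + v)"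
        by (simp add: field_simps)
      ultimately show ?thesis
        by (simp add: add.commute[of u 1])
    qed
    show "h2 (v, u) = indicator {v. 0 < u \<and> 0 < v} v * \<bar>u * (1 + u) / (1 + u + v)\<^sup>2\<bar> * h1 (u * v / (1 + u + v), u)"
      for u v :: real
    proof (cases "0 < u \<and> 0 < v")
      case True
      then have "u - u * v / (1 + u + v) = u * (1 + u) / (1 + u + v)"
        by (simp add: field_simps)
      moreover have "0 < u * (1 + u) / (1 + u + v)"
        using True by simp
      ultimately have "u * v / (1 + u + v) < u"
        by linarith
      with True \<open>u - u * v / (1 + u + v) = u * (1 + u) / (1 + u + v)\<close> show ?thesis
        by (simp add: h1_def h2_def)
    qed (auto simp: h2_def)
  qed (use h1_nonneg in \<open>auto simp: h1_def\<close>)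
  moreover have "distr (density (lborel \<Otimes>\<^sub>M lborel) h2) (lborel \<Otimes>\<^sub>M lborel) (\<lambda>(v, u). (u, v))
      = density (lborel \<Otimes>\<^sub>M lborel) (\<lambda>(u, v). h2 (v, u))"
    by (rule distr_density_swap) measurable
  ultimately show ?thesis
    unfolding comp by (intro distr_density_comp) (measurable, simp add: h2_def)
qed

section \<open>Independence from a factorized joint density\<close>

lemma has_density_prop_cmult:
  assumes "0 < k" and "has_density_prop M X (\<lambda>x. k * f x)"
  shows "has_density_prop M X f"
  using assms unfolding has_density_prop_def
  by (metis (no_types, lifting) ext mult.assoc mult_pos_pos)

lemma distributed_comp_distr_density:
  assumes "distributed M N X f" and "T \<in> N \<rightarrow>\<^sub>M N'"
    and "distr (density N f) N' T = density N' g" and "g \<in> borel_measurable N'"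
  shows "distributed M N' (\<lambda>\<omega>. T (X \<omega>)) g"
proof -
  have X: "X \<in> M \<rightarrow>\<^sub>M N"
    using assms(1) by (rule distributed_measurable)
  then have "distr M N' (\<lambda>\<omega>. T (X \<omega>)) = distr (distr M N X) N' T"
    using assms(2) by (simp add: distr_distr comp_def)
  then show ?thesis
    using assms X unfolding distributed_def by (auto intro: measurable_comp)
qed

lemma (in prob_space) indep_var_lborel_iff: "indep_var lborel X lborel Y \<longleftrightarrow> indep_var borel X borel Y"
  by (simp add: indep_var_def indep_vars_def bool.case_eq_if)

lemma (in prob_space) marginals_of_product_joint_density:
  fixes U V :: "'a \<Rightarrow> real" and P Q :: "real \<Rightarrow> real"
  assumes joint: "distributed M (lborel \<Otimes>\<^sub>M lborel) (\<lambda>\<omega>. (U \<omega>, V \<omega>)) (\<lambda>(u, v). P u * Q v)"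
    and [measurable]: "P \<in> borel_measurable borel" "Q \<in> borel_measurable borel"
    and P_nonneg: "\<And>u. 0 \<le> P u" and Q_nonneg: "\<And>v. 0 \<le> Q v"
  obtains a b where "0 < a" "0 < b" "a * b = 1"
    and "distributed M lborel U (\<lambda>u. b * P u)" and "distributed M lborel V (\<lambda>v. a * Q v)"
proof -
  define A where "A = (\<integral>\<^sup>+u. P u \<partial>lborel)"
  define B where "B = (\<integral>\<^sup>+v. Q v \<partial>lborel)"
  have "distributed M lborel U (\<lambda>u. \<integral>\<^sup>+v. ennreal (P u * Q v) \<partial>lborel)"
    using distr_marginal1[OF _ _ joint] by (simp add: lborel.sigma_finite_measure_axioms)
  then have U: "distributed M lborel U (\<lambda>u. ennreal (P u) * B)"
    by (simp add: B_def ennreal_mult P_nonneg Q_nonneg nn_integral_cmult)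
  have "distributed M lborel V (\<lambda>v. \<integral>\<^sup>+u. ennreal (P u * Q v) \<partial>lborel)"
    using distr_marginal2[OF _ _ joint] by (simp add: lborel.sigma_finite_measure_axioms)
  then have V: "distributed M lborel V (\<lambda>v. A * ennreal (Q v))"
    by (simp add: A_def ennreal_mult P_nonneg Q_nonneg nn_integral_multc)
  have "1 = emeasure M (U -` UNIV \<inter> space M)"
    by (simp add: emeasure_space_1)
  also have "\<dots> = (\<integral>\<^sup>+u. ennreal (P u) * B \<partial>lborel)"
    using distributed_emeasure[OF U, of UNIV] by simp
  finally have "A * B = 1"
    by (simp add: A_def nn_integral_multc)
  then obtain a b where ab: "A = ennreal a" "B = ennreal b" "0 \<le> a" "0 \<le> b" "a * b = 1"
    by (cases A; cases B) (auto simp: ennreal_mult[symmetric] ennreal_top_mult ennreal_mult_top split: if_splits)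
  then have "0 < a" "0 < b"
    by (auto simp: less_le)
  moreover have "distributed M lborel U (\<lambda>u. b * P u)"
    using U ab by (simp add: ennreal_mult P_nonneg mult.commute)
  moreover have "distributed M lborel V (\<lambda>v. a * Q v)"
    using V ab by (simp add: ennreal_mult Q_nonneg)
  ultimately show ?thesis
    using that \<open>a * b = 1\<close> by blast
qed

lemma (in prob_space) indep_var_of_product_joint_density:
  fixes U V :: "'a \<Rightarrow> real" and P Q :: "real \<Rightarrow> real"
  assumes joint: "distributed M (lborel \<Otimes>\<^sub>M lborel) (\<lambda>\<omega>. (U \<omega>, V \<omega>)) (\<lambda>(u, v). P u * Q v)"
    and [measurable]: "P \<in> borel_measurable borel" "Q \<in> borel_measurable borel"
    and P_nonneg: "\<And>u. 0 \<le> P u" and Q_nonneg: "\<And>v. 0 \<le> Q v"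
  shows "indep_var borel U borel V \<and> has_density_prop M U P \<and> has_density_prop M V Q"
proof -
  obtain a b where ab: "0 < a" "0 < b" "a * b = 1"
    and U: "distributed M lborel U (\<lambda>u. b * P u)" and V: "distributed M lborel V (\<lambda>v. a * Q v)"
    using marginals_of_product_joint_density[OF assms] .
  have "distr M borel U \<Otimes>\<^sub>M distr M borel V = density lborel (\<lambda>u. b * P u) \<Otimes>\<^sub>M density lborel (\<lambda>v. a * Q v)"
    using distributed_distr_eq_density[OF U] distributed_distr_eq_density[OF V]
    by (metis distr_cong sets_lborel)
  also have "\<dots> = density (lborel \<Otimes>\<^sub>M lborel) (\<lambda>(u, v). ennreal (b * P u) * ennreal (a * Q v))"
    using prob_space_distr[OF distributed_measurable[OF V]] distributed_distr_eq_density[OF V]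
    by (intro pair_measure_density) (auto intro: prob_space_imp_sigma_finite lborel.sigma_finite_measure_axioms)
  also have "\<dots> = density (lborel \<Otimes>\<^sub>M lborel) (\<lambda>(u, v). P u * Q v)"
    using ab by (auto intro!: arg_cong[where f="density _"] simp: fun_eq_iff ennreal_mult'[symmetric] P_nonneg Q_nonneg
        algebra_simps)
  also have "\<dots> = distr M (borel \<Otimes>\<^sub>M borel) (\<lambda>\<omega>. (U \<omega>, V \<omega>))"
    using distributed_distr_eq_density[OF joint] by (metis distr_cong sets_lborel sets_pair_measure_cong)
  moreover have "random_variable borel U" "random_variable borel V"
    using distributed_measurable[OF U] distributed_measurable[OF V] by simp_all
  ultimately have "indep_var borel U borel V"
    by (simp add: indep_var_distribution_eq)
  moreover have "has_density_prop M U P" "has_density_prop M V Q"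
    using U V ab unfolding has_density_prop_def by auto
  ultimately show ?thesis
    by blast
qed

text \<open>
  The normalizing constants of the densities of \<open>X\<close> and \<open>Y\<close> are not known, so the transformation
  rule is required for every positive multiple of \<open>f x * g y\<close>.
\<close>

lemma (in prob_space) indep_var_of_density_transform:
  fixes X Y :: "'a \<Rightarrow> real" and f g P Q :: "real \<Rightarrow> real" and T :: "real \<times> real \<Rightarrow> real \<times> real"
  assumes X: "has_density_prop M X f" and Y: "has_density_prop M Y g" and indep: "indep_var borel X borel Y"
    and T: "T \<in> borel \<Otimes>\<^sub>M borel \<rightarrow>\<^sub>M borel \<Otimes>\<^sub>M borel"
    and [measurable]: "f \<in> borel_measurable borel" "g \<in> borel_measurable borel"
      "P \<in> borel_measurable borel" "Q \<in> borel_measurable borel"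
    and nonneg: "\<And>x. 0 \<le> f x" "\<And>x. 0 \<le> g x" "\<And>x. 0 \<le> P x" "\<And>x. 0 \<le> Q x"
    and transform: "\<And>c. 0 < c \<Longrightarrow>
      distr (density (lborel \<Otimes>\<^sub>M lborel) (\<lambda>(x, y). c * f x * g y)) (lborel \<Otimes>\<^sub>M lborel) T
        = density (lborel \<Otimes>\<^sub>M lborel) (\<lambda>(u, v). c * P u * Q v)"
  shows "indep_var borel (\<lambda>\<omega>. fst (T (X \<omega>, Y \<omega>))) borel (\<lambda>\<omega>. snd (T (X \<omega>, Y \<omega>)))
    \<and> has_density_prop M (\<lambda>\<omega>. fst (T (X \<omega>, Y \<omega>))) P \<and> has_density_prop M (\<lambda>\<omega>. snd (T (X \<omega>, Y \<omega>))) Q"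
proof -
  obtain c1 c2 where c: "0 < c1" "0 < c2"
    and "distributed M lborel X (\<lambda>x. ennreal (c1 * f x))" "distributed M lborel Y (\<lambda>y. ennreal (c2 * g y))"
    using X Y unfolding has_density_prop_def by blast
  then have "distributed M (lborel \<Otimes>\<^sub>M lborel) (\<lambda>\<omega>. (X \<omega>, Y \<omega>))
      (\<lambda>(x, y). ennreal (c1 * f x) * ennreal (c2 * g y))"
    using indep distributed_joint_indep[OF lborel.sigma_finite_measure_axioms lborel.sigma_finite_measure_axioms]
    by (simp add: indep_var_lborel_iff)
  moreover have "(\<lambda>(x, y). ennreal (c1 * f x) * ennreal (c2 * g y)) = (\<lambda>(x, y). c1 * c2 * f x * g y)"
    using c nonneg by (simp add: fun_eq_iff ennreal_mult'[symmetric] mult_ac)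
  ultimately have joint: "distributed M (lborel \<Otimes>\<^sub>M lborel) (\<lambda>\<omega>. (X \<omega>, Y \<omega>))
      (\<lambda>(x, y). c1 * c2 * f x * g y)"
    by simp
  have T': "T \<in> lborel \<Otimes>\<^sub>M lborel \<rightarrow>\<^sub>M lborel \<Otimes>\<^sub>M lborel"
    by (subst measurable_cong_sets[OF sets_pair_measure_cong[OF sets_lborel sets_lborel]
        sets_pair_measure_cong[OF sets_lborel sets_lborel]]) (rule T)
  have "distributed M (lborel \<Otimes>\<^sub>M lborel) (\<lambda>\<omega>. T (X \<omega>, Y \<omega>)) (\<lambda>(u, v). c1 * c2 * P u * Q v)"
    using c by (intro distributed_comp_distr_density[OF joint T' transform]) measurable
  then have "indep_var borel (\<lambda>\<omega>. fst (T (X \<omega>, Y \<omega>))) borel (\<lambda>\<omega>. snd (T (X \<omega>, Y \<omega>)))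
      \<and> has_density_prop M (\<lambda>\<omega>. fst (T (X \<omega>, Y \<omega>))) (\<lambda>u. c1 * c2 * P u)
      \<and> has_density_prop M (\<lambda>\<omega>. snd (T (X \<omega>, Y \<omega>))) Q"
    using c nonneg by (intro indep_var_of_product_joint_density) (simp_all add: mult.assoc)
  then show ?thesis
    using has_density_prop_cmult[OF mult_pos_pos[OF c]] by blast
qed

lemma K_dens_nonneg: "0 \<le> K_dens lam a b p q x"
  by (simp add: K_dens_def)

lemma K2_dens_nonneg: "0 \<le> K2_dens A B C x"
  by (simp add: K2_dens_def)

lemma Ga_dens_nonneg: "0 \<le> Ga_dens A C x"
  by (simp add: Ga_dens_def)

lemma Beta'_dens_nonneg: "0 \<le> Beta'_dens A B x"
  by (simp add: Beta'_dens_def)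

lemma K_dens_measurable [measurable]: "K_dens lam a b p q \<in> borel_measurable borel"
  unfolding K_dens_def by measurable

lemma K2_dens_measurable [measurable]: "K2_dens A B C \<in> borel_measurable borel"
  unfolding K2_dens_def by measurable

lemma Ga_dens_measurable [measurable]: "Ga_dens A C \<in> borel_measurable borel"
  unfolding Ga_dens_def by measurable

lemma Beta'_dens_measurable [measurable]: "Beta'_dens A B \<in> borel_measurable borel"
  unfolding Beta'_dens_def by measurable

lemma K_dens_eq_exp:
  assumes "0 < x" "0 < q"
  shows "K_dens lam a b p q x = exp ((lam - 1) * ln x + - a * p * x + (- b + lam / 2) * ln (1 + q / x))"
proof -
  have "0 < 1 + q / x"
    using assms by (simp add: add_pos_pos)
  with assms show ?thesis
    by (simp add: K_dens_def powr_def mult_exp_exp)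
qed

text \<open>
  Both sides of the following identities are exponentials of expressions that are linear in
  logarithms, so after taking logarithms they reduce to linear arithmetic.
\<close>

lemma K_dens_H_II_jacobian:
  fixes \<alpha> \<beta> u v :: real
  assumes \<alpha>: "0 < \<alpha>" and \<beta>: "0 < \<beta>" and u: "0 < u" and v: "0 < v"
  defines "A \<equiv> \<alpha> + \<alpha> * u + \<beta> * v" and "B \<equiv> \<beta> + \<alpha> * u + \<beta> * v" and "N \<equiv> 1 + u + v"
  shows "A * B / N\<^sup>2 * (K_dens lam a b 1 \<alpha> (v * B / N) * K_dens (- lam) a b 1 \<beta> (u * A / N))
    = K_dens (- lam) a b \<alpha> 1 u * K_dens lam a b \<beta> 1 v"
proof -
  have pos: "0 < A" "0 < B" "0 < N"
    using \<alpha> \<beta> u v by (simp_all add: A_def B_def N_def add_pos_pos)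
  define X where "X = v * B / N"
  define Y where "Y = u * A / N"
  have XY: "0 < X" "0 < Y"
    using u v pos by (simp_all add: X_def Y_def)
  have lnX: "ln X = ln v + ln B - ln N" and lnY: "ln Y = ln u + ln A - ln N"
    using u v pos by (simp_all add: X_def Y_def ln_div ln_mult)
  have "1 + \<alpha> / X = (v * B + \<alpha> * N) / (v * B)"
    using v pos by (simp add: X_def field_simps)
  also have "v * B + \<alpha> * N = (1 + v) * A"
    by (simp add: A_def B_def N_def algebra_simps)
  finally have ln1: "ln (1 + \<alpha> / X) = ln (1 + v) + ln A - ln v - ln B"
    using v pos by (simp add: ln_div ln_mult)
  have "1 + \<beta> / Y = (u * A + \<beta> * N) / (u * A)"
    using u pos by (simp add: Y_def field_simps)
  also have "u * A + \<beta> * N = (1 + u) * B"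
    by (simp add: A_def B_def N_def algebra_simps)
  finally have ln2: "ln (1 + \<beta> / Y) = ln (1 + u) + ln B - ln u - ln A"
    using u pos by (simp add: ln_div ln_mult)
  have "1 + 1 / u = (1 + u) / u" "1 + 1 / v = (1 + v) / v"
    using u v by (simp_all add: field_simps)
  then have lnu: "ln (1 + 1 / u) = ln (1 + u) - ln u" and lnv: "ln (1 + 1 / v) = ln (1 + v) - ln v"
    using u v by (simp_all add: ln_div)
  have "X + Y = (v * B + u * A) / N"
    by (simp add: X_def Y_def add_divide_distrib)
  also have "v * B + u * A = (\<alpha> * u + \<beta> * v) * N"
    by (simp add: A_def B_def N_def algebra_simps)
  finally have sum: "X + Y = \<alpha> * u + \<beta> * v"
    using pos by simp
  have jac: "A * B / N\<^sup>2 = exp (ln A + ln B - (ln N + ln N))"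
    using pos by (simp only: exp_diff exp_add exp_ln power2_eq_square)
  let ?lhs = "ln A + ln B - (ln N + ln N) + ((lam - 1) * ln X + - a * 1 * X + (- b + lam / 2) * ln (1 + \<alpha> / X))
      + ((- lam - 1) * ln Y + - a * 1 * Y + (- b + - lam / 2) * ln (1 + \<beta> / Y))"
  let ?rhs = "(- lam - 1) * ln u + - a * \<alpha> * u + (- b + - lam / 2) * ln (1 + 1 / u)
      + ((lam - 1) * ln v + - a * \<beta> * v + (- b + lam / 2) * ln (1 + 1 / v))"
  have "?lhs - ?rhs = - a * (X + Y - (\<alpha> * u + \<beta> * v))"
    by (simp add: lnX lnY ln1 ln2 lnu lnv field_simps)
  then have "?lhs = ?rhs"
    by (simp add: sum)
  then show ?thesis
    unfolding X_def[symmetric] Y_def[symmetric] jac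
    using XY u v \<alpha> \<beta> by (simp add: K_dens_eq_exp mult_exp_exp)
qed

lemma K2_dens_eq_exp: "0 < x \<Longrightarrow> K2_dens A B C x = exp ((A - 1) * ln x + (- A - B) * ln (1 + x) + - C * x)"
  by (simp add: K2_dens_def powr_def mult_exp_exp)

lemma Ga_dens_eq_exp: "0 < x \<Longrightarrow> Ga_dens A C x = exp ((A - 1) * ln x + - C * x)"
  by (simp add: Ga_dens_def powr_def mult_exp_exp)

lemma Beta'_dens_eq_exp: "0 < x \<Longrightarrow> Beta'_dens A B x = exp ((A - 1) * ln x + (- A - B) * ln (1 + x))"
  by (simp add: Beta'_dens_def powr_def mult_exp_exp)

lemma K2_Ga_F_KGa_A_jacobian:
  fixes u v :: real
  assumes u: "0 < u" and v: "0 < v"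
  defines "N \<equiv> 1 + u + v"
  shows "u * (1 + u) / N\<^sup>2 * (K2_dens (b + lam / 2) (- lam) a (u * v / N) * Ga_dens (- lam) a (u * (1 + u) / N))
    = K2_dens (b - lam / 2) lam a u * Beta'_dens (b + lam / 2) (- lam) v"
proof -
  define X where "X = u * v / N"
  define Y where "Y = u * (1 + u) / N"
  have pos: "0 < N" "0 < 1 + u" "0 < X" "0 < Y"
    using u v by (simp_all add: N_def X_def Y_def)
  have lnX: "ln X = ln u + ln v - ln N" and lnY: "ln Y = ln u + ln (1 + u) - ln N"
    using u v pos by (simp_all add: X_def Y_def ln_div ln_mult)
  have "1 + X = (N + u * v) / N"
    using pos by (simp add: X_def field_simps)
  also have "N + u * v = (1 + u) * (1 + v)"
    by (simp add: N_def algebra_simps)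
  finally have ln1: "ln (1 + X) = ln (1 + u) + ln (1 + v) - ln N"
    using u v pos by (simp add: ln_div ln_mult)
  have "X + Y = u * N / N"
    by (simp add: X_def Y_def N_def add_divide_distrib[symmetric] algebra_simps)
  then have sum: "X + Y = u"
    using pos by simp
  have jac: "u * (1 + u) / N\<^sup>2 = exp (ln u + ln (1 + u) - (ln N + ln N))"
    using u pos by (simp only: exp_diff exp_add exp_ln power2_eq_square)
  let ?lhs = "ln u + ln (1 + u) - (ln N + ln N) + ((b + lam / 2 - 1) * ln X + (- (b + lam / 2) - - lam) * ln (1 + X) + - a * X
      + ((- lam - 1) * ln Y + - a * Y))"
  let ?rhs = "(b - lam / 2 - 1) * ln u + (- (b - lam / 2) - lam) * ln (1 + u) + - a * u
      + ((b + lam / 2 - 1) * ln v + (- (b + lam / 2) - - lam) * ln (1 + v))"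
  have "?lhs - ?rhs = - a * (X + Y - u)"
    by (simp add: lnX lnY ln1 field_simps)
  then have "?lhs = ?rhs"
    by (simp add: sum)
  then show ?thesis
    unfolding X_def[symmetric] Y_def[symmetric] jac
    using pos u v by (simp add: K2_dens_eq_exp Ga_dens_eq_exp Beta'_dens_eq_exp mult_exp_exp)
qed

lemma (in prob_space) H_II_K_dens_independence:
  fixes X Y :: "'a \<Rightarrow> real"
  assumes \<alpha>: "0 < \<alpha>" and \<beta>: "0 < \<beta>"
    and "has_density_prop M X (K_dens lam a b 1 \<alpha>)" "has_density_prop M Y (K_dens (- lam) a b 1 \<beta>)"
    and "indep_var borel X borel Y"
  shows "indep_var borel (\<lambda>\<omega>. fst (H_II \<alpha> \<beta> (X \<omega>) (Y \<omega>))) borel (\<lambda>\<omega>. snd (H_II \<alpha> \<beta> (X \<omega>) (Y \<omega>)))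
    \<and> has_density_prop M (\<lambda>\<omega>. fst (H_II \<alpha> \<beta> (X \<omega>) (Y \<omega>))) (K_dens (- lam) a b \<alpha> 1)
    \<and> has_density_prop M (\<lambda>\<omega>. snd (H_II \<alpha> \<beta> (X \<omega>) (Y \<omega>))) (K_dens lam a b \<beta> 1)"
proof -
  have "distr (density (lborel \<Otimes>\<^sub>M lborel) (\<lambda>(x, y). c * K_dens lam a b 1 \<alpha> x * K_dens (- lam) a b 1 \<beta> y))
      (lborel \<Otimes>\<^sub>M lborel) (\<lambda>(x, y). H_II \<alpha> \<beta> x y)
    = density (lborel \<Otimes>\<^sub>M lborel) (\<lambda>(u, v). c * K_dens (- lam) a b \<alpha> 1 u * K_dens lam a b \<beta> 1 v)"
    if "0 < c" for c
  proof -
    let ?h = "\<lambda>(x, y). c * K_dens lam a b 1 \<alpha> x * K_dens (- lam) a b 1 \<beta> y"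
    have "distr (density (lborel \<Otimes>\<^sub>M lborel) ?h) (lborel \<Otimes>\<^sub>M lborel) (\<lambda>(x, y). H_II \<alpha> \<beta> x y)
      = density (lborel \<Otimes>\<^sub>M lborel) (\<lambda>(u, v). if 0 < u \<and> 0 < v then
        (\<alpha> + \<alpha> * u + \<beta> * v) * (\<beta> + \<alpha> * u + \<beta> * v) / (1 + u + v)\<^sup>2
          * ?h (v * (\<beta> + \<alpha> * u + \<beta> * v) / (1 + u + v), u * (\<alpha> + \<alpha> * u + \<beta> * v) / (1 + u + v))
        else 0)"
      using that by (intro distr_density_H_II[OF \<alpha> \<beta>]) (auto simp: K_dens_nonneg K_dens_def)
    also have "(\<lambda>(u, v). if 0 < u \<and> 0 < v then
        (\<alpha> + \<alpha> * u + \<beta> * v) * (\<beta> + \<alpha> * u + \<beta> * v) / (1 + u + v)\<^sup>2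
          * ?h (v * (\<beta> + \<alpha> * u + \<beta> * v) / (1 + u + v), u * (\<alpha> + \<alpha> * u + \<beta> * v) / (1 + u + v))
        else 0)
      = (\<lambda>(u, v). c * K_dens (- lam) a b \<alpha> 1 u * K_dens lam a b \<beta> 1 v)"
      using K_dens_H_II_jacobian[OF \<alpha> \<beta>, of _ _ lam a b] by (auto simp: fun_eq_iff K_dens_def mult_ac)
    finally show ?thesis .
  qed
  then have "indep_var borel (\<lambda>\<omega>. fst ((\<lambda>(x, y). H_II \<alpha> \<beta> x y) (X \<omega>, Y \<omega>)))
      borel (\<lambda>\<omega>. snd ((\<lambda>(x, y). H_II \<alpha> \<beta> x y) (X \<omega>, Y \<omega>)))
    \<and> has_density_prop M (\<lambda>\<omega>. fst ((\<lambda>(x, y). H_II \<alpha> \<beta> x y) (X \<omega>, Y \<omega>))) (K_dens (- lam) a b \<alpha> 1)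
    \<and> has_density_prop M (\<lambda>\<omega>. snd ((\<lambda>(x, y). H_II \<alpha> \<beta> x y) (X \<omega>, Y \<omega>))) (K_dens lam a b \<beta> 1)"
    using assms by (intro indep_var_of_density_transform) (auto simp: K_dens_nonneg H_II_def)
  then show ?thesis
    by simp
qed

lemma (in prob_space) F_KGa_A_K2_Ga_independence:
  fixes X Y :: "'a \<Rightarrow> real"
  assumes "has_density_prop M X (K2_dens (b + lam / 2) (- lam) a)" "has_density_prop M Y (Ga_dens (- lam) a)"
    and "indep_var borel X borel Y"
  shows "indep_var borel (\<lambda>\<omega>. fst (F_KGa_A (X \<omega>) (Y \<omega>))) borel (\<lambda>\<omega>. snd (F_KGa_A (X \<omega>) (Y \<omega>)))
    \<and> has_density_prop M (\<lambda>\<omega>. fst (F_KGa_A (X \<omega>) (Y \<omega>))) (K2_dens (b - lam / 2) lam a)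
    \<and> has_density_prop M (\<lambda>\<omega>. snd (F_KGa_A (X \<omega>) (Y \<omega>))) (Beta'_dens (b + lam / 2) (- lam))"
proof -
  have "distr (density (lborel \<Otimes>\<^sub>M lborel) (\<lambda>(x, y). c * K2_dens (b + lam / 2) (- lam) a x * Ga_dens (- lam) a y))
      (lborel \<Otimes>\<^sub>M lborel) (\<lambda>(x, y). F_KGa_A x y)
    = density (lborel \<Otimes>\<^sub>M lborel) (\<lambda>(u, v). c * K2_dens (b - lam / 2) lam a u * Beta'_dens (b + lam / 2) (- lam) v)"
    if "0 < c" for c
  proof -
    let ?h = "\<lambda>(x, y). c * K2_dens (b + lam / 2) (- lam) a x * Ga_dens (- lam) a y"
    have "distr (density (lborel \<Otimes>\<^sub>M lborel) ?h) (lborel \<Otimes>\<^sub>M lborel) (\<lambda>(x, y). F_KGa_A x y)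
      = density (lborel \<Otimes>\<^sub>M lborel) (\<lambda>(u, v). if 0 < u \<and> 0 < v then
          u * (1 + u) / (1 + u + v)\<^sup>2 * ?h (u * v / (1 + u + v), u * (1 + u) / (1 + u + v)) else 0)"
      using that by (intro distr_density_F_KGa_A) (auto simp: K2_dens_nonneg Ga_dens_nonneg K2_dens_def Ga_dens_def)
    also have "(\<lambda>(u, v). if 0 < u \<and> 0 < v then
          u * (1 + u) / (1 + u + v)\<^sup>2 * ?h (u * v / (1 + u + v), u * (1 + u) / (1 + u + v)) else 0)
      = (\<lambda>(u, v). c * K2_dens (b - lam / 2) lam a u * Beta'_dens (b + lam / 2) (- lam) v)"
      using K2_Ga_F_KGa_A_jacobian[of _ _ b lam a]
      by (auto simp: fun_eq_iff K2_dens_def Beta'_dens_def mult_ac)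
    finally show ?thesis .
  qed
  then have "indep_var borel (\<lambda>\<omega>. fst ((\<lambda>(x, y). F_KGa_A x y) (X \<omega>, Y \<omega>)))
      borel (\<lambda>\<omega>. snd ((\<lambda>(x, y). F_KGa_A x y) (X \<omega>, Y \<omega>)))
    \<and> has_density_prop M (\<lambda>\<omega>. fst ((\<lambda>(x, y). F_KGa_A x y) (X \<omega>, Y \<omega>))) (K2_dens (b - lam / 2) lam a)
    \<and> has_density_prop M (\<lambda>\<omega>. snd ((\<lambda>(x, y). F_KGa_A x y) (X \<omega>, Y \<omega>))) (Beta'_dens (b + lam / 2) (- lam))"
    using assms by (intro indep_var_of_density_transform)
      (auto simp: K2_dens_nonneg Ga_dens_nonneg Beta'_dens_nonneg F_KGa_A_def)
  then show ?thesis
    by simp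
qed

theorem corollary5p2:
  fixes M :: "'a measure"
  assumes "prob_space M"
  shows
   "(\<forall>(\<alpha>::real) (\<beta>::real) (lam::real) (a::real) (b::real) (X::'a \<Rightarrow> real) (Y::'a \<Rightarrow> real).
       0 < \<alpha> \<and> 0 < \<beta> \<and> 0 < a \<and> 0 < b \<and> - b < lam / 2 \<and> lam / 2 < b \<and>
       has_density_prop M X (K_dens lam a b 1 \<alpha>) \<and>
       has_density_prop M Y (K_dens (- lam) a b 1 \<beta>) \<and>
       prob_space.indep_var M borel X borel Y
       \<longrightarrow>
       (let U = (\<lambda>\<omega>. fst (H_II \<alpha> \<beta> (X \<omega>) (Y \<omega>)));
            V = (\<lambda>\<omega>. snd (H_II \<alpha> \<beta> (X \<omega>) (Y \<omega>)))
        in prob_space.indep_var M borel U borel V \<and>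
           has_density_prop M U (K_dens (- lam) a b \<alpha> 1) \<and>
           has_density_prop M V (K_dens lam a b \<beta> 1)))
    \<and>
    (\<forall>(lam::real) (a::real) (b::real) (X::'a \<Rightarrow> real) (Y::'a \<Rightarrow> real).
       lam < 0 \<and> 0 < a \<and> 0 < b \<and> - b < lam / 2 \<and>
       has_density_prop M X (K2_dens (b + lam / 2) (- lam) a) \<and>
       has_density_prop M Y (Ga_dens (- lam) a) \<and>
       prob_space.indep_var M borel X borel Y
       \<longrightarrow>
       (let U = (\<lambda>\<omega>. fst (F_KGa_A (X \<omega>) (Y \<omega>)));
            V = (\<lambda>\<omega>. snd (F_KGa_A (X \<omega>) (Y \<omega>)))
        in prob_space.indep_var M borel U borel V \<and>
           has_density_prop M U (K2_dens (b - lam / 2) lam a) \<and>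
           has_density_prop M V (Beta'_dens (b + lam / 2) (- lam))))"
  unfolding Let_def
  using prob_space.H_II_K_dens_independence[OF assms] prob_space.F_KGa_A_K2_Ga_independence[OF assms]
  by blast

end
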